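(* Consider logical Bell-state measurements on two logical qubits $a,b$ encoded jointly (by a single encoder having access to both input states) into a set of physical qubits, each physical qubit being independently lost with probability $\varepsilon$. The logical Bell-state-measurement loss-tolerance threshold $\varepsilon^{(BSM)}$ of a family of such codes is at most $1$, and this bound is attained: there exists a family $\mathcal{C}$ of such two-logical-qubit codes (with $2n$ physical qubits, $n\ge 1$) such that for every $\varepsilon<1$ and every $\varepsilon'>0$ there is $C\in\mathcal{C}$ for which the logical Bell-state measurement succeeds with probability greater than $1-\varepsilon'$; i.e. $\varepsilon^{(BSM)}=1$ for this family.
   Context: A logical Bell-state measurement (BSM) on two logical qubits $a,b$ encoded by a code $C$ is the joint measurement of the two commuting logical operators $X_{aC}X_{bC}$ and $Z_{aC}Z_{bC}$, where $X,Z$ denote Pauli operators and the subscript $C$ denotes the logical operator on the code space; it succeeds if both outcomes are correctly obtained. The four Bell states are $|\Phi^\pm\rangle=(|00\rangle\pm|11\rangle)/\sqrt2$ and $|\Psi^\pm\rangle=(|01\rangle\pm|10\rangle)/\sqrt2$. A family $\mathcal{C}$ of codes has logical BSM loss threshold $\varepsilon^{(BSM)}$ equal to the supremum of values $e$ such that for every $\varepsilon<e$ and every $\varepsilon'>0$ there exists $C\in\mathcal{C}$ whose logical BSM (performed by any physically allowed measurement on the surviving physical qubits) succeeds with probability $>1-\varepsilon'$ when each physical qubit is independently lost with probability $\varepsilon$. *)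

theory Defs
  imports Complex_Main
begin

text \<open>Physical states of m qubits are amplitude functions on computational-basis
configurations.  A configuration on a set A of qubit indices is a function
nat => bool that is False outside A.\<close>

definition cfg :: "nat set \<Rightarrow> (nat \<Rightarrow> bool) set" where
  "cfg A = {x. \<forall>i. x i \<longrightarrow> i \<in> A}"

definition glue :: "(nat \<Rightarrow> bool) \<Rightarrow> (nat \<Rightarrow> bool) \<Rightarrow> (nat \<Rightarrow> bool)" where
  "glue y z = (\<lambda>i. y i \<or> z i)"

text \<open>A two-logical-qubit code on m physical qubits: number of physical qubits and an
isometric encoder from the logical basis |ab> (a,b :: bool) into the m-qubit space.\<close>
type_synonym code = "nat \<times> (bool \<times> bool \<Rightarrow> (nat \<Rightarrow> bool) \<Rightarrow> complex)"

definition is_code :: "code \<Rightarrow> bool" where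
  "is_code C \<longleftrightarrow> (let m = fst C; enc = snd C in
     (\<forall>l x. x \<notin> cfg {..<m} \<longrightarrow> enc l x = 0) \<and>
     (\<forall>l l'. (\<Sum>x\<in>cfg {..<m}. cnj (enc l x) * enc l' x) = (if l = l' then 1 else 0)))"

text \<open>Bell states, labelled by (z,x): z = True iff Psi (ZZ = -1), x = True iff minus
sign (XX = -1). So (F,F)=Phi+, (F,T)=Phi-, (T,F)=Psi+, (T,T)=Psi-.\<close>
definition bell :: "bool \<times> bool \<Rightarrow> bool \<times> bool \<Rightarrow> complex" where
  "bell k ab = (if (fst ab \<noteq> snd ab) = fst k
                then (if snd k \<and> fst ab then -1 else 1) / complex_of_real (sqrt 2)
                else 0)"

definition enc_bell :: "code \<Rightarrow> bool \<times> bool \<Rightarrow> (nat \<Rightarrow> bool) \<Rightarrow> complex" where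
  "enc_bell C k x = (\<Sum>ab\<in>UNIV. bell k ab * snd C ab x)"

text \<open>Reduced density matrix of the encoded Bell state k on the surviving set S
(partial trace over the lost qubits {..<m} - S).\<close>
definition reduced :: "code \<Rightarrow> bool \<times> bool \<Rightarrow> nat set \<Rightarrow>
    (nat \<Rightarrow> bool) \<Rightarrow> (nat \<Rightarrow> bool) \<Rightarrow> complex" where
  "reduced C k S y y' = (\<Sum>z\<in>cfg ({..<fst C} - S).
      enc_bell C k (glue y z) * cnj (enc_bell C k (glue y' z)))"

definition psd_on :: "nat set \<Rightarrow> ((nat \<Rightarrow> bool) \<Rightarrow> (nat \<Rightarrow> bool) \<Rightarrow> complex) \<Rightarrow> bool" where
  "psd_on S M \<longleftrightarrow> (\<forall>v. let q = (\<Sum>x\<in>cfg S. \<Sum>y\<in>cfg S. cnj (v x) * M x y * v y)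
                          in Im q = 0 \<and> Re q \<ge> 0)"

text \<open>A POVM on the qubits in S with outcomes labelled by the four Bell labels
(the most general physically allowed measurement).\<close>
definition povm_on :: "nat set \<Rightarrow> (bool \<times> bool \<Rightarrow> (nat \<Rightarrow> bool) \<Rightarrow> (nat \<Rightarrow> bool) \<Rightarrow> complex) \<Rightarrow> bool" where
  "povm_on S M \<longleftrightarrow> (\<forall>k. psd_on S (M k)) \<and>
     (\<forall>x\<in>cfg S. \<forall>y\<in>cfg S. (\<Sum>k\<in>UNIV. M k x y) = (if x = y then 1 else 0))"

definition outcome_prob :: "nat set \<Rightarrow> ((nat \<Rightarrow> bool) \<Rightarrow> (nat \<Rightarrow> bool) \<Rightarrow> complex) \<Rightarrow>
    ((nat \<Rightarrow> bool) \<Rightarrow> (nat \<Rightarrow> bool) \<Rightarrow> complex) \<Rightarrow> real" where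
  "outcome_prob S M rho = Re (\<Sum>x\<in>cfg S. \<Sum>y\<in>cfg S. M x y * rho y x)"

definition loss_prob :: "nat \<Rightarrow> real \<Rightarrow> nat set \<Rightarrow> real" where
  "loss_prob m eps S = (1 - eps) ^ card S * eps ^ (m - card S)"

definition bsm_succeeds_gt :: "code \<Rightarrow> real \<Rightarrow> real \<Rightarrow> bool" where
  "bsm_succeeds_gt C eps p \<longleftrightarrow> (\<exists>M. (\<forall>S\<subseteq>{..<fst C}. povm_on S (M S)) \<and>
     (\<forall>k. (\<Sum>S\<in>Pow {..<fst C}. loss_prob (fst C) eps S *
            outcome_prob S (M S k) (reduced C k S)) > p))"

definition bsm_threshold :: "code set \<Rightarrow> real" where
  "bsm_threshold F = Sup {e. \<forall>eps. 0 \<le> eps \<and> eps \<le> 1 \<and> eps < e \<longrightarrow>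
       (\<forall>eps'>0. \<exists>C\<in>F. bsm_succeeds_gt C eps (1 - eps'))}"

end

theory Submission
  imports Defs
begin

text \<open>
  Upper bound: when every qubit is lost the measurement acts on a one-dimensional space, so
  its outcome probabilities do not depend on the input; they sum to one, hence the four Bell
  states cannot all be identified with probability above 1/4.

  Attainment: encode the Bell basis, rather than the computational basis, into classical
  codewords, the Bell state with labels (z,x) becoming the product state |z..z x..x> on 2n
  qubits.  Measuring the survivors in the computational basis recovers z from any surviving
  qubit of the first half and x from any surviving qubit of the second half, so the
  measurement fails only if a whole half is lost, which has probability at most 2 eps^n.
\<close>

lemma finite_cfg: "finite A \<Longrightarrow> finite (cfg A)"
proof -
  assume "finite A"
  have "cfg A \<subseteq> (\<lambda>B i. i \<in> B) ` Pow A"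
  proof
    fix x assume "x \<in> cfg A"
    then have "{i. x i} \<in> Pow A" by (auto simp: cfg_def)
    moreover have "x = (\<lambda>i. i \<in> {i. x i})" by auto
    ultimately show "x \<in> (\<lambda>B i. i \<in> B) ` Pow A" by blast
  qed
  then show ?thesis using \<open>finite A\<close> by (meson finite_Pow_iff finite_imageI finite_subset)
qed

lemma cfg_empty: "cfg {} = {\<lambda>_. False}"
  by (auto simp: cfg_def)

lemma sum_Pow_card_powers:
  fixes p q :: "'a :: comm_semiring_1"
  assumes "finite A"
  shows "(\<Sum>S\<in>Pow A. p ^ card S * q ^ (card A - card S)) = (p + q) ^ card A"
proof -
  have "(p + q) ^ card A = (\<Prod>x\<in>A. p + q)" by simp
  also have "\<dots> = (\<Sum>S\<in>Pow A. (\<Prod>x\<in>S. p) * (\<Prod>x\<in>A - S. q))"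
    by (rule prod_add[OF assms])
  also have "\<dots> = (\<Sum>S\<in>Pow A. p ^ card S * q ^ (card A - card S))"
    using assms by (intro sum.cong) (auto simp: card_Diff_subset finite_subset)
  finally show ?thesis by simp
qed

lemma loss_prob_nonneg: "0 \<le> e \<Longrightarrow> e \<le> 1 \<Longrightarrow> 0 \<le> loss_prob m e S"
  by (simp add: loss_prob_def)

lemma loss_prob_total_loss: "finite S \<Longrightarrow> loss_prob m 1 S = (if S = {} then 1 else 0)"
  by (simp add: loss_prob_def card_gt_0_iff)

lemma sum_loss_prob_Pow:
  assumes "B \<subseteq> {..<m}"
  shows "(\<Sum>S\<in>Pow B. loss_prob m e S) = e ^ (m - card B)"
proof -
  have "finite B" using assms finite_subset by blast
  have "(\<Sum>S\<in>Pow B. loss_prob m e S)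
      = (\<Sum>S\<in>Pow B. e ^ (m - card B) * ((1 - e) ^ card S * e ^ (card B - card S)))"
  proof (rule sum.cong)
    fix S assume "S \<in> Pow B"
    then have "card S \<le> card B" "card B \<le> m"
      using assms \<open>finite B\<close> card_mono[of "{..<m}" B] by (auto intro: card_mono)
    then have "m - card S = (m - card B) + (card B - card S)" by simp
    then show "loss_prob m e S = e ^ (m - card B) * ((1 - e) ^ card S * e ^ (card B - card S))"
      by (simp add: loss_prob_def power_add)
  qed simp
  also have "\<dots> = e ^ (m - card B)"
    by (simp add: sum_distrib_left[symmetric] sum_Pow_card_powers[OF \<open>finite B\<close>])
  finally show ?thesis .
qed

lemma sum_loss_prob_all_outside_lost:
  assumes "B \<subseteq> {..<m}"
  shows "(\<Sum>S\<in>Pow {..<m}. if S \<subseteq> B then loss_prob m e S else 0) = e ^ (m - card B)"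
proof -
  have "{S \<in> Pow {..<m}. S \<subseteq> B} = Pow B" using assms by auto
  then show ?thesis
    using sum.inter_filter[of "Pow {..<m}" "loss_prob m e" "\<lambda>S. S \<subseteq> B"]
    by (simp add: sum_loss_prob_Pow[OF assms])
qed

lemma UNIV_bool_prod:
  "(UNIV :: (bool \<times> bool) set) = {(False, False), (False, True), (True, False), (True, True)}"
  by auto

lemma cnj_bell [simp]: "cnj (bell k ab) = bell k ab"
  by (simp add: bell_def)

lemma sqrt2_mult_sqrt2: "complex_of_real (sqrt 2) * complex_of_real (sqrt 2) = 2"
  by (simp flip: of_real_mult)

lemma bell_orthonormal: "(\<Sum>ab\<in>UNIV. bell k ab * bell k' ab) = (if k = k' then 1 else 0)"
  by (cases k; cases k') (auto simp: bell_def UNIV_bool_prod field_simps sqrt2_mult_sqrt2)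

lemma bell_complete: "(\<Sum>k\<in>UNIV. bell k l * bell k l') = (if l = l' then 1 else 0)"
  by (cases l; cases l') (auto simp: bell_def UNIV_bool_prod field_simps sqrt2_mult_sqrt2)

lemma enc_bell_norm:
  assumes "is_code C"
  shows "(\<Sum>x\<in>cfg {..<fst C}. enc_bell C k x * cnj (enc_bell C k x)) = 1"
proof -
  define U where "U = cfg {..<fst C}"
  define e where "e = snd C"
  have orth: "(\<Sum>x\<in>U. cnj (e l x) * e l' x) = (if l = l' then 1 else 0)" for l l'
    using assms unfolding is_code_def U_def e_def Let_def by blast
  have "(\<Sum>x\<in>U. enc_bell C k x * cnj (enc_bell C k x))
      = (\<Sum>l\<in>UNIV. \<Sum>l'\<in>UNIV. bell k l * bell k l' * (\<Sum>x\<in>U. cnj (e l x) * e l' x))"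
    unfolding enc_bell_def e_def
    by (simp add: sum_distrib_left sum_distrib_right cnj_sum mult_ac sum.swap[of _ U])
  also have "\<dots> = (\<Sum>l\<in>UNIV. bell k l * bell k l)"
    by (simp add: orth if_distrib cong: if_cong)
  also have "\<dots> = 1"
    using bell_orthonormal[of k k] by simp
  finally show ?thesis unfolding U_def .
qed

definition bsm_success_prob :: "code \<Rightarrow> real \<Rightarrow>
    (nat set \<Rightarrow> bool \<times> bool \<Rightarrow> (nat \<Rightarrow> bool) \<Rightarrow> (nat \<Rightarrow> bool) \<Rightarrow> complex) \<Rightarrow>
    bool \<times> bool \<Rightarrow> real" where
  "bsm_success_prob C eps M k = (\<Sum>S\<in>Pow {..<fst C}.
      loss_prob (fst C) eps S * outcome_prob S (M S k) (reduced C k S))"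

lemma bsm_succeeds_gt_iff:
  "bsm_succeeds_gt C eps p \<longleftrightarrow>
     (\<exists>M. (\<forall>S\<subseteq>{..<fst C}. povm_on S (M S)) \<and> (\<forall>k. p < bsm_success_prob C eps M k))"
  by (simp add: bsm_succeeds_gt_def bsm_success_prob_def)

lemma bsm_success_prob_total_loss:
  assumes "is_code C"
  shows "bsm_success_prob C 1 M k = Re (M {} k (\<lambda>_. False) (\<lambda>_. False))"
proof -
  have "reduced C k {} (\<lambda>_. False) (\<lambda>_. False) = 1"
    using enc_bell_norm[OF assms] by (simp add: reduced_def glue_def)
  moreover have "bsm_success_prob C 1 M k
      = (\<Sum>S\<in>Pow {..<fst C}. if S = {} then outcome_prob S (M S k) (reduced C k S) else 0)"
    unfolding bsm_success_prob_def
    by (rule sum.cong) (auto simp: loss_prob_total_loss finite_subset)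
  ultimately show ?thesis by (simp add: outcome_prob_def cfg_empty)
qed

lemma not_bsm_succeeds_gt_total_loss:
  assumes "is_code C" and "1/4 \<le> p"
  shows "\<not> bsm_succeeds_gt C 1 p"
proof
  assume "bsm_succeeds_gt C 1 p"
  then obtain M where "povm_on {} (M {})" and success: "\<And>k. p < bsm_success_prob C 1 M k"
    unfolding bsm_succeeds_gt_iff by blast
  define x0 :: "nat \<Rightarrow> bool" where "x0 = (\<lambda>_. False)"
  have "(\<Sum>k\<in>UNIV. M {} k x0 x0) = 1"
    using \<open>povm_on {} (M {})\<close> by (simp add: povm_on_def cfg_empty x0_def)
  then have "(\<Sum>k\<in>UNIV. Re (M {} k x0 x0)) = 1"
    by (metis Re_sum one_complex.sel(1))
  moreover have "(\<Sum>k\<in>(UNIV :: (bool \<times> bool) set). p) < (\<Sum>k\<in>UNIV. Re (M {} k x0 x0))"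
    using success
    by (intro sum_strict_mono) (simp_all add: bsm_success_prob_total_loss[OF assms(1)] x0_def)
  ultimately show False
    using \<open>1/4 \<le> p\<close> by (simp add: UNIV_bool_prod)
qed

lemma bsm_threshold_candidate_le_1:
  assumes "\<forall>C\<in>F. is_code C"
    and "\<forall>eps. 0 \<le> eps \<and> eps \<le> 1 \<and> eps < e \<longrightarrow>
           (\<forall>eps'>0. \<exists>C\<in>F. bsm_succeeds_gt C eps (1 - eps'))"
  shows "e \<le> 1"
proof (rule ccontr)
  assume "\<not> e \<le> 1"
  then obtain C where "C \<in> F" "bsm_succeeds_gt C 1 (1 - 1/2)"
    using assms(2)[rule_format, of 1 "1/2"] by auto
  then show False
    using not_bsm_succeeds_gt_total_loss[of C "1 - 1/2"] assms(1) by auto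
qed

lemma bsm_threshold_le_1:
  assumes "\<forall>C\<in>F. is_code C"
  shows "bsm_threshold F \<le> 1"
  unfolding bsm_threshold_def
proof (rule cSup_least)
  show "{e. \<forall>eps. 0 \<le> eps \<and> eps \<le> 1 \<and> eps < e \<longrightarrow>
          (\<forall>eps'>0. \<exists>C\<in>F. bsm_succeeds_gt C eps (1 - eps'))} \<noteq> {}"
    by (rule ex_in_conv[THEN iffD1], rule exI[of _ 0]) auto
qed (use bsm_threshold_candidate_le_1[OF assms] in blast)

lemma bsm_threshold_eq_1:
  assumes "\<forall>C\<in>F. is_code C"
    and "\<forall>eps. 0 \<le> eps \<and> eps < 1 \<longrightarrow> (\<forall>eps'>0. \<exists>C\<in>F. bsm_succeeds_gt C eps (1 - eps'))"
  shows "bsm_threshold F = 1"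
  unfolding bsm_threshold_def
  by (rule cSup_eq_maximum) (use assms bsm_threshold_candidate_le_1[OF assms(1)] in auto)

definition basis_povm :: "((nat \<Rightarrow> bool) \<Rightarrow> bool \<times> bool) \<Rightarrow>
    bool \<times> bool \<Rightarrow> (nat \<Rightarrow> bool) \<Rightarrow> (nat \<Rightarrow> bool) \<Rightarrow> complex" where
  "basis_povm f k x y = (if x = y \<and> f x = k then 1 else 0)"

lemma basis_povm_quadratic_form:
  assumes "finite S"
  shows "(\<Sum>x\<in>cfg S. \<Sum>y\<in>cfg S. cnj (v x) * basis_povm f k x y * v y)
       = of_real (\<Sum>x\<in>cfg S. if f x = k then (cmod (v x))\<^sup>2 else 0)"
proof -
  have "(\<Sum>y\<in>cfg S. cnj (v x) * basis_povm f k x y * v y)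
      = of_real (if f x = k then (cmod (v x))\<^sup>2 else 0)" if "x \<in> cfg S" for x
  proof -
    have "(\<Sum>y\<in>cfg S. cnj (v x) * basis_povm f k x y * v y)
        = (\<Sum>y\<in>cfg S. if x = y then (if f x = k then cnj (v x) * v x else 0) else 0)"
      by (rule sum.cong) (auto simp: basis_povm_def)
    also have "\<dots> = of_real (if f x = k then (cmod (v x))\<^sup>2 else 0)"
      using that by (simp add: sum.delta finite_cfg[OF assms] complex_norm_square mult.commute
          del: of_real_power)
    finally show ?thesis .
  qed
  then show ?thesis by simp
qed

lemma povm_on_basis_povm:
  assumes "finite S"
  shows "povm_on S (basis_povm f)"
  unfolding povm_on_def
proof (intro conjI allI ballI)
  fix k
  have "0 \<le> (\<Sum>x\<in>cfg S. if f x = k then (cmod (v x))\<^sup>2 else 0)" for v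
    by (rule sum_nonneg) auto
  then show "psd_on S (basis_povm f k)"
    by (simp add: psd_on_def basis_povm_quadratic_form[OF assms])
next
  fix x y
  show "(\<Sum>k\<in>UNIV. basis_povm f k x y) = (if x = y then 1 else 0)"
    by (simp add: basis_povm_def eq_commute[of "f x"])
qed

definition restrict_cfg :: "nat set \<Rightarrow> (nat \<Rightarrow> bool) \<Rightarrow> nat \<Rightarrow> bool" where
  "restrict_cfg S w = (\<lambda>i. i \<in> S \<and> w i)"

lemma restrict_cfg_in_cfg: "restrict_cfg S w \<in> cfg S"
  by (simp add: restrict_cfg_def cfg_def)

lemma glue_eq_iff:
  assumes "y \<in> cfg S" "z \<in> cfg (U - S)" "w \<in> cfg U"
  shows "glue y z = w \<longleftrightarrow> y = restrict_cfg S w \<and> z = restrict_cfg (U - S) w"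
  using assms unfolding glue_def restrict_cfg_def cfg_def fun_eq_iff by blast

lemma reduced_basis_state_diag:
  assumes basis: "\<And>x. enc_bell C k x = (if x = w then 1 else 0)"
    and "w \<in> cfg {..<fst C}" and "y \<in> cfg S"
  shows "reduced C k S y y = (if y = restrict_cfg S w then 1 else 0)"
proof -
  let ?L = "{..<fst C} - S"
  have "reduced C k S y y
      = (\<Sum>z\<in>cfg ?L. if z = restrict_cfg ?L w then (if y = restrict_cfg S w then 1 else 0) else 0)"
    unfolding reduced_def basis
    by (rule sum.cong) (auto simp: glue_eq_iff[OF \<open>y \<in> cfg S\<close> _ \<open>w \<in> cfg {..<fst C}\<close>])
  then show ?thesis
    by (simp add: sum.delta finite_cfg restrict_cfg_in_cfg)
qed

lemma outcome_prob_basis_state: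
  assumes "finite S"
    and basis: "\<And>x. enc_bell C k x = (if x = w then 1 else 0)"
    and "w \<in> cfg {..<fst C}"
  shows "outcome_prob S (basis_povm f k) (reduced C k S)
       = (if f (restrict_cfg S w) = k then 1 else 0)"
proof -
  have "(\<Sum>x\<in>cfg S. \<Sum>y\<in>cfg S. basis_povm f k x y * reduced C k S y x)
      = (\<Sum>x\<in>cfg S. if x = restrict_cfg S w then (if f x = k then 1 else 0) else 0)"
  proof (rule sum.cong)
    fix x assume x: "x \<in> cfg S"
    have "(\<Sum>y\<in>cfg S. basis_povm f k x y * reduced C k S y x)
        = (\<Sum>y\<in>cfg S. if x = y then (if f x = k then reduced C k S x x else 0) else 0)"
      by (rule sum.cong) (auto simp: basis_povm_def)
    then show "(\<Sum>y\<in>cfg S. basis_povm f k x y * reduced C k S y x)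
        = (if x = restrict_cfg S w then (if f x = k then 1 else 0) else 0)"
      using x reduced_basis_state_diag[OF basis assms(3)]
      by (simp add: sum.delta finite_cfg[OF \<open>finite S\<close>] restrict_cfg_in_cfg)
  qed simp
  then show ?thesis
    by (simp add: outcome_prob_def sum.delta' finite_cfg[OF \<open>finite S\<close>] restrict_cfg_in_cfg)
qed

definition bell_codeword :: "nat \<Rightarrow> bool \<times> bool \<Rightarrow> nat \<Rightarrow> bool" where
  "bell_codeword n k = (\<lambda>i. (i < n \<and> fst k) \<or> (n \<le> i \<and> i < 2 * n \<and> snd k))"

text \<open>The map |l> \<mapsto> \<Sum>k. <k|l> |codeword k> sends the Bell state k to |codeword k>.\<close>

definition rep_encoder :: "nat \<Rightarrow> bool \<times> bool \<Rightarrow> (nat \<Rightarrow> bool) \<Rightarrow> complex" where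
  "rep_encoder n l x = (\<Sum>k\<in>UNIV. if x = bell_codeword n k then bell k l else 0)"

definition rep_code :: "nat \<Rightarrow> code" where
  "rep_code n = (2 * n, rep_encoder n)"

lemma bell_codeword_in_cfg: "bell_codeword n k \<in> cfg {..<2 * n}"
  by (auto simp: bell_codeword_def cfg_def)

lemma bell_codeword_eq_iff:
  assumes "1 \<le> n"
  shows "bell_codeword n k = bell_codeword n k' \<longleftrightarrow> k = k'"
proof
  assume eq: "bell_codeword n k = bell_codeword n k'"
  have "bell_codeword n k 0 = bell_codeword n k' 0" "bell_codeword n k n = bell_codeword n k' n"
    using eq by auto
  then show "k = k'" using assms by (cases k; cases k') (auto simp: bell_codeword_def)
qed simp

lemma rep_encoder_codeword: "1 \<le> n \<Longrightarrow> rep_encoder n l (bell_codeword n k) = bell k l"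
  by (simp add: rep_encoder_def bell_codeword_eq_iff eq_commute[of k])

lemma rep_encoder_non_codeword: "x \<notin> range (bell_codeword n) \<Longrightarrow> rep_encoder n l x = 0"
  unfolding rep_encoder_def by (rule sum.neutral) auto

lemma is_code_rep_code:
  assumes "1 \<le> n"
  shows "is_code (rep_code n)"
  unfolding is_code_def Let_def rep_code_def fst_conv snd_conv
proof (intro conjI allI impI)
  fix l x assume "x \<notin> cfg {..<2 * n}"
  then show "rep_encoder n l x = 0"
    using bell_codeword_in_cfg by (blast intro: rep_encoder_non_codeword)
next
  fix l l'
  have "(\<Sum>x\<in>cfg {..<2 * n}. cnj (rep_encoder n l x) * rep_encoder n l' x)
      = (\<Sum>x\<in>range (bell_codeword n). cnj (rep_encoder n l x) * rep_encoder n l' x)"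
    by (rule sum.mono_neutral_right)
      (auto simp: finite_cfg bell_codeword_in_cfg rep_encoder_non_codeword)
  also have "\<dots> = (\<Sum>k\<in>UNIV. bell k l * bell k l')"
    by (rule sum.reindex_cong[where l = "bell_codeword n"])
      (auto simp: inj_def bell_codeword_eq_iff[OF assms] rep_encoder_codeword[OF assms])
  finally show "(\<Sum>x\<in>cfg {..<2 * n}. cnj (rep_encoder n l x) * rep_encoder n l' x)
      = (if l = l' then 1 else 0)"
    by (simp add: bell_complete)
qed

lemma enc_bell_rep_code:
  assumes "1 \<le> n"
  shows "enc_bell (rep_code n) k x = (if x = bell_codeword n k then 1 else 0)"
proof (cases "x \<in> range (bell_codeword n)")
  case True
  then obtain k' where x: "x = bell_codeword n k'" by auto
  then have "enc_bell (rep_code n) k x = (\<Sum>l\<in>UNIV. bell k l * bell k' l)"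
    by (simp add: enc_bell_def rep_code_def rep_encoder_codeword[OF assms])
  then show ?thesis
    by (simp add: bell_orthonormal x bell_codeword_eq_iff[OF assms] eq_commute)
next
  case False
  then show ?thesis
    by (auto simp: enc_bell_def rep_code_def rep_encoder_non_codeword)
qed

definition decode_halves :: "nat \<Rightarrow> (nat \<Rightarrow> bool) \<Rightarrow> bool \<times> bool" where
  "decode_halves n y = ((\<exists>i<n. y i), (\<exists>i\<ge>n. y i))"

lemma decode_halves_restrict_codeword:
  assumes "S \<subseteq> {..<2 * n}" "\<not> S \<subseteq> {..<n}" "\<not> S \<subseteq> {n..<2 * n}"
  shows "decode_halves n (restrict_cfg S (bell_codeword n k)) = k"
proof -
  obtain i where "i \<in> S" "i < n" using assms(1,3) by fastforce
  moreover obtain j where "j \<in> S" "n \<le> j" "j < 2 * n" using assms(1,2) by fastforce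
  ultimately show ?thesis
    using assms(1) by (cases k) (auto simp: decode_halves_def restrict_cfg_def bell_codeword_def)
qed

lemma bsm_success_prob_rep_code:
  assumes "1 \<le> n" "0 \<le> e" "e \<le> 1"
  shows "1 - 2 * e ^ n \<le> bsm_success_prob (rep_code n) e (\<lambda>S. basis_povm (decode_halves n)) k"
proof -
  let ?U = "{..<2 * n}" and ?p = "loss_prob (2 * n) e"
  let ?lost = "\<lambda>B S. if S \<subseteq> B then ?p S else 0"
  have halves: "{n..<2 * n} \<subseteq> ?U" "{..<n} \<subseteq> ?U" by auto
  have "1 - 2 * e ^ n
      = (\<Sum>S\<in>Pow ?U. ?p S) - (\<Sum>S\<in>Pow ?U. ?lost {n..<2 * n} S) - (\<Sum>S\<in>Pow ?U. ?lost {..<n} S)"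
    using sum_loss_prob_Pow[of ?U "2 * n" e] sum_loss_prob_all_outside_lost[OF halves(1), of e]
      sum_loss_prob_all_outside_lost[OF halves(2), of e]
    by simp
  also have "\<dots> = (\<Sum>S\<in>Pow ?U. ?p S - ?lost {n..<2 * n} S - ?lost {..<n} S)"
    by (simp add: sum_subtractf)
  also have "\<dots> \<le> (\<Sum>S\<in>Pow ?U. ?p S * outcome_prob S (basis_povm (decode_halves n) k)
                                          (reduced (rep_code n) k S))"
  proof (rule sum_mono)
    fix S assume "S \<in> Pow ?U"
    then have "S \<subseteq> ?U" "finite S" by (auto intro: finite_subset)
    have "outcome_prob S (basis_povm (decode_halves n) k) (reduced (rep_code n) k S)
        = (if decode_halves n (restrict_cfg S (bell_codeword n k)) = k then 1 else 0)"
      using bell_codeword_in_cfg[of n k]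
      by (intro outcome_prob_basis_state[OF \<open>finite S\<close> enc_bell_rep_code[OF assms(1)]])
        (simp add: rep_code_def)
    moreover have "0 \<le> ?p S" using assms(2,3) by (rule loss_prob_nonneg)
    ultimately show "?p S - ?lost {n..<2 * n} S - ?lost {..<n} S
        \<le> ?p S * outcome_prob S (basis_povm (decode_halves n) k) (reduced (rep_code n) k S)"
      using decode_halves_restrict_codeword[OF \<open>S \<subseteq> ?U\<close>, of k]
      by (cases "S \<subseteq> {n..<2 * n} \<or> S \<subseteq> {..<n}") auto
  qed
  also have "\<dots> = bsm_success_prob (rep_code n) e (\<lambda>S. basis_povm (decode_halves n)) k"
    by (simp add: bsm_success_prob_def rep_code_def)
  finally show ?thesis .
qed

lemma rep_code_succeeds:
  assumes "0 \<le> eps" "eps < 1" "0 < eps'"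
  shows "\<exists>n\<ge>1. bsm_succeeds_gt (rep_code n) eps (1 - eps')"
proof -
  obtain m where "eps ^ m < eps' / 2"
    using real_arch_pow_inv[of "eps' / 2" eps] assms by auto
  moreover have "eps ^ Suc m \<le> eps ^ m"
    using assms by (intro power_decreasing) auto
  ultimately have small: "1 - eps' < 1 - 2 * eps ^ Suc m" by simp
  define M where "M = (\<lambda>S :: nat set. basis_povm (decode_halves (Suc m)))"
  have "1 - eps' < bsm_success_prob (rep_code (Suc m)) eps M k" for k
    using small bsm_success_prob_rep_code[of "Suc m" eps k] assms unfolding M_def by simp
  moreover have "povm_on S (M S)" if "S \<subseteq> {..<fst (rep_code (Suc m))}" for S
    using finite_subset[OF that] by (simp add: M_def povm_on_basis_povm)
  ultimately have "bsm_succeeds_gt (rep_code (Suc m)) eps (1 - eps')"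
    unfolding bsm_succeeds_gt_iff by blast
  moreover have "1 \<le> Suc m" by simp
  ultimately show ?thesis by blast
qed

theorem lemma3:
  shows "(\<forall>F. (\<forall>C\<in>F. is_code C) \<longrightarrow> bsm_threshold F \<le> 1) \<and>
         (\<exists>F. (\<forall>C\<in>F. is_code C \<and> (\<exists>n\<ge>1. fst C = 2 * n)) \<and>
              (\<forall>eps. 0 \<le> eps \<and> eps < 1 \<longrightarrow>
                 (\<forall>eps'>0. \<exists>C\<in>F. bsm_succeeds_gt C eps (1 - eps'))) \<and>
              bsm_threshold F = 1)"
proof (intro conjI allI impI)
  fix F :: "code set"
  assume "\<forall>C\<in>F. is_code C"
  then show "bsm_threshold F \<le> 1" by (rule bsm_threshold_le_1)
next
  define F where "F = rep_code ` {n. 1 \<le> n}"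
  have codes: "\<forall>C\<in>F. is_code C \<and> (\<exists>n\<ge>1. fst C = 2 * n)"
    unfolding F_def using is_code_rep_code by (auto simp: rep_code_def)
  have succeeds: "\<forall>eps. 0 \<le> eps \<and> eps < 1 \<longrightarrow>
      (\<forall>eps'>0. \<exists>C\<in>F. bsm_succeeds_gt C eps (1 - eps'))"
    unfolding F_def using rep_code_succeeds by fast
  moreover have "bsm_threshold F = 1"
    using codes succeeds by (simp add: bsm_threshold_eq_1)
  ultimately show "\<exists>F. (\<forall>C\<in>F. is_code C \<and> (\<exists>n\<ge>1. fst C = 2 * n)) \<and>
      (\<forall>eps. 0 \<le> eps \<and> eps < 1 \<longrightarrow> (\<forall>eps'>0. \<exists>C\<in>F. bsm_succeeds_gt C eps (1 - eps'))) \<and>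
      bsm_threshold F = 1"
    using codes by blast
qed

end
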